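(* Let $q$ be a positive integer and suppose that for each divisor $d$ of $q$ we are given a function $a_d:\mathbb Z\to\mathbb C$ of period $d$ with $|a_d(n)|\le1$ for all $n$, such that $a_{d_1d_2}(n)=a_{d_1}(n)a_{d_2}(n)$ whenever $d_1d_2\mid q$ and $\gcd(d_1,d_2)=1$. If $I$ is an interval of length $N$, then $$\frac1N\Big|\sum_{n\in I}a_q(n)\Big|\ll\Big(1+\frac{q\log q}{N}\Big)\prod_{p^e\| q}\ \max_{b\bmod p^e}\Big|\frac1{p^e}\sum_{r\bmod p^e}a_{p^e}(r)\,e\Big(\frac{br}{p^e}\Big)\Big|.$$
   Context: $e(x)=e^{2\pi i x}$; the sum over $I$ is over integers; the implied constant is absolute. *)

theory Defs
  imports "HOL-Analysis.Analysis" "HOL-Computational_Algebra.Primes"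
begin

definition ee :: "real \<Rightarrow> complex" where
  "ee x = exp (2 * of_real pi * \<i> * of_real x)"

end

theory Submission
  imports Defs
begin

text \<open>
  Write c(b) = (1/q) sum_{r mod q} a_q(r) e(br/q). Fourier inversion on Z/qZ gives
  a_q(n) = sum_b c(b) e(-bn/q), so the sum over the interval equals sum_b c(b) G(b) with
  geometric sums G(b). Here |G(0)| <= N and |G(b)| <= 1/sin(pi b/q) <= q/b + q/(q-b) for
  0 < b < q, hence |sum| <= max_b |c(b)| (N + 2 q H_{q-1}), and H_{q-1} <= 3 log q.
  By the Chinese remainder theorem, multiplicativity a_{d1 d2} = a_{d1} a_{d2} turns the
  coefficients of a_q into products of coefficients of the a_{p^e}, so max_b |c(b)| is at
  most the product of the local maxima.
\<close>

section \<open>Additive characters and periodic functions\<close>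

lemma ee_cis: "ee x = cis (2 * pi * x)"
  unfolding ee_def by (simp add: cis_conv_exp mult_ac)

lemma ee_add: "ee (x + y) = ee x * ee y"
  by (simp add: ee_cis cis_mult distrib_left)

lemma norm_ee [simp]: "norm (ee x) = 1"
  by (simp add: ee_cis)

lemma ee_power: "ee x ^ n = ee (real n * x)"
  by (simp only: ee_cis Complex.DeMoivre) (simp add: mult_ac)

lemma ee_eq_1_iff: "ee x = 1 \<longleftrightarrow> x \<in> \<int>"
proof -
  have "ee x = exp (complex_of_real (2 * pi * x) * \<i>)"
    unfolding ee_def by (simp add: mult_ac)
  also have "\<dots> = 1 \<longleftrightarrow> (\<exists>n::int. 2 * pi * x = of_int (2 * n) * pi)"
    by (simp add: exp_eq_1)
  also have "\<dots> \<longleftrightarrow> x \<in> \<int>"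
    by (auto elim!: Ints_cases)
  finally show ?thesis .
qed

lemma ee_of_int [simp]: "ee (of_int k) = 1"
  by (simp add: ee_eq_1_iff)

lemma ee_divide_cong:
  assumes "int d dvd x - y"
  shows "ee (of_int x / real d) = ee (of_int y / real d)"
proof (cases "d = 0")
  case False
  obtain k where "x - y = int d * k" using assms by (auto simp: dvd_def)
  then have "of_int x / real d = of_int y / real d + of_int k"
    using False by (simp add: field_simps)
  then show ?thesis by (simp add: ee_add)
qed (use assms in simp)

lemma norm_ee_minus_1: "norm (ee x - 1) = 2 * \<bar>sin (pi * x)\<bar>"
  using dist_exp_i_1[of "2 * pi * x"] unfolding ee_def by (simp add: mult_ac)

lemma periodic_add_mult:
  fixes f :: "int \<Rightarrow> 'a"
  assumes "\<forall>n. f (n + c) = f n"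
  shows "f (n + k * c) = f n"
proof (induction k arbitrary: n rule: int_induct[where k = 0])
  case (step1 i)
  then show ?case using assms by (metis add.assoc distrib_right mult_1)
next
  case (step2 i)
  have "f (n + (i - 1) * c) = f (n + (i - 1) * c + c)" using assms by simp
  also have "\<dots> = f (n + i * c)" by (simp add: algebra_simps)
  finally show ?case using step2 by simp
qed simp

lemma periodic_mod:
  fixes f :: "int \<Rightarrow> 'a"
  assumes "\<forall>n. f (n + int d) = f n"
  shows "f (n mod int d) = f n"
  using periodic_add_mult[OF assms, of "n mod int d" "n div int d"] by simp

lemma sum_atLeastLessThan_int_eq: "(\<Sum>b\<in>{0..<int d}. g b) = (\<Sum>j<d. g (int j))"
  by (rule sum.reindex_bij_witness[of _ int nat]) auto

lemma sum_interval_int_eq: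
  "(\<Sum>n\<in>{M+1..M + int N}. g n) = (\<Sum>k<N. g (M + 1 + int k))"
  by (rule sum.reindex_bij_witness[where i = "\<lambda>k. M + 1 + int k" and j = "\<lambda>n. nat (n - M - 1)"]) auto

lemma sum_ee_multiples:
  assumes "d > 0"
  shows "(\<Sum>b\<in>{0..<int d}. ee (of_int (b * k) / real d)) = (if int d dvd k then of_nat d else 0)"
proof -
  define z where "z = ee (of_int k / real d)"
  have "(\<Sum>b\<in>{0..<int d}. ee (of_int (b * k) / real d)) = (\<Sum>j<d. z ^ j)"
    unfolding sum_atLeastLessThan_int_eq z_def ee_power by simp
  also have "\<dots> = (if z = 1 then of_nat d else (1 - z ^ d) / (1 - z))"
    by (rule sum_gp_strict)
  also have "z ^ d = 1"
    unfolding z_def ee_power using assms by simp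
  also have "z = 1 \<longleftrightarrow> int d dvd k"
  proof -
    have "z = 1 \<longleftrightarrow> (\<exists>m::int. of_int k / real d = of_int m)"
      unfolding z_def ee_eq_1_iff by (auto elim!: Ints_cases)
    also have "\<dots> \<longleftrightarrow> (\<exists>m. k = int d * m)"
    proof
      assume "\<exists>m::int. of_int k / real d = of_int m"
      then obtain m where "real_of_int k = real_of_int (int d * m)"
        using assms by (auto simp: field_simps)
      then show "\<exists>m. k = int d * m" by (intro exI[of _ m]) linarith
    qed (use assms in auto)
    finally show ?thesis by (auto simp: dvd_def)
  qed
  finally show ?thesis by simp
qed

section \<open>Finite Fourier coefficients\<close>

definition fourier_coeff :: "nat \<Rightarrow> (int \<Rightarrow> complex) \<Rightarrow> int \<Rightarrow> complex" where
  "fourier_coeff d f b =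
     of_real (1 / real d) * (\<Sum>r\<in>{0..<int d}. f r * ee (real_of_int (b * r) / real d))"

definition max_fourier_coeff :: "nat \<Rightarrow> (int \<Rightarrow> complex) \<Rightarrow> real" where
  "max_fourier_coeff d f = Max ((\<lambda>b. norm (fourier_coeff d f b)) ` {0..<int d})"

lemma fourier_coeff_mod: "fourier_coeff d f (b mod int d) = fourier_coeff d f b"
proof -
  have "ee (real_of_int (b mod int d * r) / real d) = ee (real_of_int (b * r) / real d)" for r
  proof (rule ee_divide_cong)
    have "int d dvd b mod int d - b" by (simp add: mod_eq_dvd_iff[symmetric])
    then show "int d dvd b mod int d * r - b * r" by (simp add: dvd_mult2 flip: left_diff_distrib)
  qed
  then show ?thesis unfolding fourier_coeff_def by simp
qed

lemma norm_fourier_coeff_le_max: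
  assumes "d > 0"
  shows "norm (fourier_coeff d f b) \<le> max_fourier_coeff d f"
proof -
  have "norm (fourier_coeff d f (b mod int d)) \<le> max_fourier_coeff d f"
    unfolding max_fourier_coeff_def using assms by (intro Max_ge) auto
  then show ?thesis by (simp add: fourier_coeff_mod)
qed

lemma max_fourier_coeff_nonneg: "d > 0 \<Longrightarrow> 0 \<le> max_fourier_coeff d f"
  using norm_fourier_coeff_le_max[of d f 0] norm_ge_zero[of "fourier_coeff d f 0"] by linarith

lemma max_fourier_coeff_1: "max_fourier_coeff 1 f = norm (f 0)"
proof -
  have "{0..<1::int} = {0}" by auto
  then show ?thesis by (simp add: max_fourier_coeff_def fourier_coeff_def ee_def)
qed

lemma fourier_inversion:
  assumes "d > 0" and periodic: "\<forall>n. f (n + int d) = f n"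
  shows "f n = (\<Sum>b\<in>{0..<int d}. fourier_coeff d f b * ee (- (of_int (b * n) / real d)))"
proof -
  have ee_diff: "ee (of_int (b * r) / real d) * ee (- (of_int (b * n) / real d))
      = ee (of_int (b * (r - n)) / real d)" for b r
    by (simp add: ee_add[symmetric] algebra_simps diff_divide_distrib)
  have "(\<Sum>b\<in>{0..<int d}. fourier_coeff d f b * ee (- (of_int (b * n) / real d)))
      = (\<Sum>b\<in>{0..<int d}. \<Sum>r\<in>{0..<int d}.
           of_real (1 / real d) * f r * ee (of_int (b * (r - n)) / real d))"
    unfolding fourier_coeff_def sum_distrib_left sum_distrib_right
    by (intro sum.cong refl) (simp only: ee_diff[symmetric] mult_ac)
  also have "\<dots> = (\<Sum>r\<in>{0..<int d}. of_real (1 / real d) * f r *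
           (\<Sum>b\<in>{0..<int d}. ee (of_int (b * (r - n)) / real d)))"
    by (subst sum.swap) (simp add: sum_distrib_left)
  also have "\<dots> = (\<Sum>r\<in>{0..<int d}. if r = n mod int d then f r else 0)"
  proof (rule sum.cong[OF refl])
    fix r assume "r \<in> {0..<int d}"
    then have "int d dvd r - n \<longleftrightarrow> r = n mod int d"
      by (metis atLeastLessThan_iff mod_eq_dvd_iff mod_pos_pos_trivial)
    then show "of_real (1 / real d) * f r * (\<Sum>b\<in>{0..<int d}. ee (of_int (b * (r - n)) / real d))
        = (if r = n mod int d then f r else 0)"
      unfolding sum_ee_multiples[OF assms(1)] using assms(1) by simp
  qed
  also have "\<dots> = f n"
    using assms(1) by (simp add: periodic_mod[OF periodic])
  finally show ?thesis ..
qed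

section \<open>Sums over intervals\<close>

lemma norm_geometric_sum_le:
  fixes z :: "'a :: real_normed_field"
  assumes "norm z = 1" "z \<noteq> 1"
  shows "norm (\<Sum>k<N. z ^ k) \<le> 2 / norm (z - 1)"
proof -
  have "norm (\<Sum>k<N. z ^ k) = norm (z ^ N - 1) / norm (z - 1)"
    unfolding geometric_sum[OF assms(2)] by (rule norm_divide)
  also have "\<dots> \<le> 2 / norm (z - 1)"
  proof (rule divide_right_mono)
    show "norm (z ^ N - 1) \<le> 2"
      using norm_triangle_ineq4[of "z ^ N" 1] assms(1) by (simp add: norm_power)
  qed simp
  finally show ?thesis .
qed

lemma norm_sum_ee_interval_le:
  fixes M :: int
  assumes "sin (pi * x) \<noteq> 0"
  shows "norm (\<Sum>n\<in>{M+1..M + int N}. ee (of_int n * x)) \<le> 1 / \<bar>sin (pi * x)\<bar>"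
proof -
  have shift: "ee (of_int (M + 1 + int k) * x) = ee (of_int (M + 1) * x) * ee x ^ k" for k
  proof -
    have "of_int (M + 1 + int k) * x = of_int (M + 1) * x + real k * x"
      by (simp add: distrib_right)
    then show ?thesis by (simp only: ee_power ee_add)
  qed
  have "(\<Sum>n\<in>{M+1..M + int N}. ee (of_int n * x)) = ee (of_int (M + 1) * x) * (\<Sum>k<N. ee x ^ k)"
    unfolding sum_interval_int_eq shift by (rule sum_distrib_left[symmetric])
  then have "norm (\<Sum>n\<in>{M+1..M + int N}. ee (of_int n * x)) = norm (\<Sum>k<N. ee x ^ k)"
    by (simp add: norm_mult)
  also have "\<dots> \<le> 2 / norm (ee x - 1)"
    using assms norm_ee_minus_1[of x] by (intro norm_geometric_sum_le) auto
  also have "\<dots> = 1 / \<bar>sin (pi * x)\<bar>"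
    by (simp add: norm_ee_minus_1)
  finally show ?thesis .
qed

lemma le_sin_pi:
  fixes x :: real
  assumes "0 \<le> x" "x \<le> 1 / 2"
  shows "x \<le> sin (pi * x)"
proof (cases "x \<le> 1 / 3")
  case True
  have "(\<lambda>t. sin (pi * t) - t) 0 \<le> (\<lambda>t. sin (pi * t) - t) x"
  proof (rule DERIV_nonneg_imp_nondecreasing[OF assms(1)])
    fix t assume t: "0 \<le> t" "t \<le> x"
    have "cos (pi / 3) \<le> cos (pi * t)"
      using t True by (intro cos_monotone_0_pi_le) auto
    then have "2 * cos (pi * t) \<le> pi * cos (pi * t)" and "1 \<le> 2 * cos (pi * t)"
      using pi_ge_two by (simp_all add: cos_60 mult_right_mono)
    then have "1 \<le> pi * cos (pi * t)"
      by linarith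
    moreover have "((\<lambda>t. sin (pi * t) - t) has_real_derivative pi * cos (pi * t) - 1) (at t)"
      by (auto intro!: derivative_eq_intros)
    ultimately show "\<exists>y. ((\<lambda>t. sin (pi * t) - t) has_real_derivative y) (at t) \<and> 0 \<le> y"
      by force
  qed
  then show ?thesis by simp
next
  case False
  have "sqrt 3 / 2 \<le> sin (pi * x)"
    unfolding sin_60[symmetric]
    by (rule sin_monotone_2pi_le) (use False assms pi_ge_two in auto)
  moreover have "1 \<le> sqrt (3 :: real)"
    by simp
  ultimately show ?thesis
    using assms(2) by linarith
qed

lemma inverse_sin_pi_frac_le:
  fixes b d :: nat
  assumes "0 < b" "b < d"
  shows "1 / sin (pi * (real b / real d)) \<le> real d / real b + real d / real (d - b)"
proof (cases "2 * b \<le> d")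
  case True
  then have "real b / real d \<le> sin (pi * (real b / real d))"
    using assms by (intro le_sin_pi) (auto simp: field_simps)
  then have "1 / sin (pi * (real b / real d)) \<le> 1 / (real b / real d)"
    using assms by (intro frac_le) simp_all
  then show ?thesis by (simp add: add_increasing2)
next
  case False
  have "real (d - b) / real d \<le> sin (pi * (real (d - b) / real d))"
    using False assms by (intro le_sin_pi) (auto simp: field_simps of_nat_diff)
  also have "pi * (real (d - b) / real d) = pi - pi * (real b / real d)"
    using assms by (simp add: field_simps of_nat_diff)
  finally have "real (d - b) / real d \<le> sin (pi * (real b / real d))"
    by simp
  then have "1 / sin (pi * (real b / real d)) \<le> 1 / (real (d - b) / real d)"
    using assms by (intro frac_le) simp_all
  then show ?thesis by (simp add: add_increasing)
qed

lemma sum_inverse_sin_pi_frac_le: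
  assumes "d > 0"
  shows "(\<Sum>b\<in>{1..<d}. 1 / sin (pi * (real b / real d))) \<le> 2 * real d * harm (d - 1)"
proof -
  have "{1..<d} = {1..d - 1}"
    using assms by auto
  then have harm: "(\<Sum>b\<in>{1..<d}. 1 / real b) = harm (d - 1)"
    by (simp add: harm_def inverse_eq_divide)
  have reflect: "(\<Sum>b\<in>{1..<d}. 1 / real (d - b)) = (\<Sum>b\<in>{1..<d}. 1 / real b)"
    by (rule sum.reindex_bij_witness[where i = "\<lambda>b. d - b" and j = "\<lambda>b. d - b"]) auto
  have "(\<Sum>b\<in>{1..<d}. 1 / sin (pi * (real b / real d)))
      \<le> (\<Sum>b\<in>{1..<d}. real d * (1 / real b) + real d * (1 / real (d - b)))"
    by (rule sum_mono) (use inverse_sin_pi_frac_le in auto)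
  also have "\<dots> = 2 * real d * harm (d - 1)"
    unfolding sum.distrib sum_distrib_left[symmetric] reflect harm by simp
  finally show ?thesis .
qed

lemma harm_pred_le_ln:
  assumes "d > 0"
  shows "harm (d - 1) \<le> 3 * ln (real d)"
proof (cases "d = 1")
  case False
  then have "d \<ge> 2" using assms by simp
  have "harm (d - 1) - ln (real (d - 1)) \<le> harm 1 - ln (real (1 :: nat))"
    by (rule euler_mascheroni_sequence_decreasing) (use \<open>d \<ge> 2\<close> in auto)
  moreover have "ln (real (d - 1)) \<le> ln (real d)"
    using \<open>d \<ge> 2\<close> by simp
  moreover have "ln 2 \<le> ln (real d)"
    using \<open>d \<ge> 2\<close> by simp
  moreover note ln2_ge_two_thirds
  ultimately show ?thesis
    by (simp add: harm_def)
qed (simp add: harm_def)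

lemma sum_norm_ee_interval_le:
  fixes M :: int
  assumes "d > 0"
  shows "(\<Sum>b\<in>{0..<int d}. norm (\<Sum>n\<in>{M+1..M + int N}. ee (- (of_int (b * n) / real d))))
    \<le> real N + 2 * real d * harm (d - 1)"
proof -
  define G where "G b = norm (\<Sum>n\<in>{M+1..M + int N}. ee (- (of_int (b * n) / real d)))" for b
  have G_le: "G (int b) \<le> 1 / sin (pi * (real b / real d))" if "b \<in> {1..<d}" for b
  proof -
    have "0 < sin (pi * (real b / real d))"
      using that by (intro sin_gt_zero) (auto simp: field_simps)
    moreover have "ee (- (of_int (int b * n) / real d)) = ee (of_int n * - (real b / real d))" for n
      by (simp add: field_simps)
    ultimately show ?thesis
      unfolding G_def using norm_sum_ee_interval_le[of "- (real b / real d)" M N] by simp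
  qed
  have "{..<d} = insert 0 {1..<d}"
    using assms by auto
  then have "(\<Sum>b\<in>{0..<int d}. G b) = G 0 + (\<Sum>b\<in>{1..<d}. G (int b))"
    by (simp add: sum_atLeastLessThan_int_eq)
  also have "G 0 = real N"
    unfolding G_def by (simp add: ee_def)
  also have "(\<Sum>b\<in>{1..<d}. G (int b)) \<le> (\<Sum>b\<in>{1..<d}. 1 / sin (pi * (real b / real d)))"
    by (rule sum_mono) (rule G_le)
  also have "\<dots> \<le> 2 * real d * harm (d - 1)"
    by (rule sum_inverse_sin_pi_frac_le[OF assms])
  finally show ?thesis
    unfolding G_def by simp
qed

lemma norm_sum_periodic_le:
  fixes M :: int
  assumes "d > 0" and periodic: "\<forall>n. f (n + int d) = f n"
  shows "norm (\<Sum>n\<in>{M+1..M + int N}. f n)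
    \<le> max_fourier_coeff d f * (real N + 2 * real d * harm (d - 1))"
proof -
  define G where "G b = (\<Sum>n\<in>{M+1..M + int N}. ee (- (of_int (b * n) / real d)))" for b
  have "(\<Sum>n\<in>{M+1..M + int N}. f n)
      = (\<Sum>n\<in>{M+1..M + int N}. \<Sum>b\<in>{0..<int d}.
           fourier_coeff d f b * ee (- (of_int (b * n) / real d)))"
    by (intro sum.cong refl fourier_inversion assms)
  also have "\<dots> = (\<Sum>b\<in>{0..<int d}. fourier_coeff d f b * G b)"
    unfolding G_def sum_distrib_left by (rule sum.swap)
  finally have "norm (\<Sum>n\<in>{M+1..M + int N}. f n) = norm (\<Sum>b\<in>{0..<int d}. fourier_coeff d f b * G b)"
    by (rule arg_cong)
  also have "\<dots> \<le> (\<Sum>b\<in>{0..<int d}. norm (fourier_coeff d f b) * norm (G b))"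
    unfolding norm_mult[symmetric] by (rule norm_sum)
  also have "\<dots> \<le> (\<Sum>b\<in>{0..<int d}. max_fourier_coeff d f * norm (G b))"
    by (intro sum_mono mult_right_mono norm_fourier_coeff_le_max assms norm_ge_zero)
  also have "\<dots> \<le> max_fourier_coeff d f * (real N + 2 * real d * harm (d - 1))"
    unfolding G_def sum_distrib_left[symmetric]
    by (intro mult_left_mono sum_norm_ee_interval_le max_fourier_coeff_nonneg assms)
  finally show ?thesis .
qed

lemma norm_sum_periodic_le_ln:
  fixes M :: int
  assumes "d > 0" "N > 0" and periodic: "\<forall>n. f (n + int d) = f n"
  shows "(1 / real N) * norm (\<Sum>n\<in>{M+1..M + int N}. f n)
    \<le> 6 * (1 + real d * ln (real d) / real N) * max_fourier_coeff d f"
proof -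
  let ?F = "max_fourier_coeff d f" and ?L = "real d * ln (real d)"
  have F_nonneg: "0 \<le> ?F" and L_nonneg: "0 \<le> ?L"
    using assms(1) by (simp_all add: max_fourier_coeff_nonneg)
  have "2 * real d * harm (d - 1) \<le> 2 * real d * (3 * ln (real d))"
    using harm_pred_le_ln[OF assms(1)] by (intro mult_left_mono) simp_all
  then have "?F * (real N + 2 * real d * harm (d - 1)) \<le> ?F * (real N + 6 * ?L)"
    by (intro mult_left_mono F_nonneg) simp
  with norm_sum_periodic_le[OF assms(1) periodic, of M N]
  have "norm (\<Sum>n\<in>{M+1..M + int N}. f n) \<le> ?F * (real N + 6 * ?L)"
    by linarith
  then have "(1 / real N) * norm (\<Sum>n\<in>{M+1..M + int N}. f n) \<le> ?F * (1 + 6 * ?L / real N)"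
    using assms(2) by (simp add: field_simps)
  also have "\<dots> \<le> ?F * (6 * (1 + ?L / real N))"
    using L_nonneg by (intro mult_left_mono F_nonneg) simp
  finally show ?thesis
    by (simp add: mult_ac)
qed

section \<open>Multiplicativity\<close>

lemma bij_betw_mod_pair:
  assumes "m > 0" "n > 0" "coprime m n"
  shows "bij_betw (\<lambda>r. (r mod int m, r mod int n)) {0..<int (m * n)} ({0..<int m} \<times> {0..<int n})"
proof -
  let ?h = "\<lambda>r. (r mod int m, r mod int n)"
  have inj: "inj_on ?h {0..<int (m * n)}"
  proof (rule inj_onI, rule ccontr)
    fix r s assume r: "r \<in> {0..<int (m * n)}" and s: "s \<in> {0..<int (m * n)}"
      and "?h r = ?h s" and "r \<noteq> s"
    then have "int m dvd r - s" "int n dvd r - s" by (auto simp: mod_eq_dvd_iff)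
    then have "int m * int n dvd r - s" using assms(3) by (simp add: divides_mult)
    then have "int m * int n \<le> \<bar>r - s\<bar>"
      using dvd_imp_le_int[of "r - s" "int m * int n"] \<open>r \<noteq> s\<close> by simp
    moreover have "\<bar>r - s\<bar> < int m * int n" using r s by auto
    ultimately show False by simp
  qed
  have "?h ` {0..<int (m * n)} = {0..<int m} \<times> {0..<int n}"
  proof (rule card_subset_eq)
    show "?h ` {0..<int (m * n)} \<subseteq> {0..<int m} \<times> {0..<int n}"
      using assms by auto
    show "card (?h ` {0..<int (m * n)}) = card ({0..<int m} \<times> {0..<int n})"
      using card_image[OF inj] by (simp add: card_cartesian_product flip: of_nat_mult)
  qed simp
  with inj show ?thesis by (simp add: bij_betw_def)
qed

text \<open>
  With u n + v m = 1 the phase b r/(m n) splits as b u r/m + b v r/n, and the Chinese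
  remainder theorem turns the sum over r mod m n into a product of sums mod m and mod n.
\<close>

lemma fourier_coeff_mult:
  assumes "m > 0" "n > 0" "coprime m n"
    and periodic_f: "\<forall>x. f (x + int m) = f x" and periodic_g: "\<forall>x. g (x + int n) = g x"
    and bezout: "u * int n + v * int m = 1"
  shows "fourier_coeff (m * n) (\<lambda>r. f r * g r) b = fourier_coeff m f (b * u) * fourier_coeff n g (b * v)"
proof -
  define F where "F s = f s * ee (of_int (b * u * s) / real m)" for s
  define G where "G t = g t * ee (of_int (b * v * t) / real n)" for t
  have term_split: "f r * g r * ee (of_int (b * r) / real (m * n)) = F (r mod int m) * G (r mod int n)" for r
  proof -
    have "of_int (b * r) / real (m * n) = of_int (b * r * (u * int n + v * int m)) / real (m * n)"
      using bezout by simp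
    also have "\<dots> = of_int (b * u * r) / real m + of_int (b * v * r) / real n"
      using assms(1,2) by (simp add: field_simps)
    finally have "ee (of_int (b * r) / real (m * n))
        = ee (of_int (b * u * r) / real m) * ee (of_int (b * v * r) / real n)"
      by (simp add: ee_add)
    also have "ee (of_int (b * u * r) / real m) = ee (of_int (b * u * (r mod int m)) / real m)"
      by (rule ee_divide_cong) (simp flip: right_diff_distrib add: mod_eq_dvd_iff[symmetric])
    also have "ee (of_int (b * v * r) / real n) = ee (of_int (b * v * (r mod int n)) / real n)"
      by (rule ee_divide_cong) (simp flip: right_diff_distrib add: mod_eq_dvd_iff[symmetric])
    finally show ?thesis
      unfolding F_def G_def periodic_mod[OF periodic_f] periodic_mod[OF periodic_g]
      by (simp add: mult_ac)
  qed
  have "(\<Sum>r\<in>{0..<int (m * n)}. f r * g r * ee (of_int (b * r) / real (m * n)))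
      = (\<Sum>r\<in>{0..<int (m * n)}. (\<lambda>(s, t). F s * G t) (r mod int m, r mod int n))"
    using term_split by simp
  also have "\<dots> = (\<Sum>(s, t)\<in>{0..<int m} \<times> {0..<int n}. F s * G t)"
    by (rule sum.reindex_bij_betw[OF bij_betw_mod_pair[OF assms(1-3)]])
  also have "\<dots> = (\<Sum>s\<in>{0..<int m}. F s) * (\<Sum>t\<in>{0..<int n}. G t)"
    by (simp add: sum_product sum.cartesian_product)
  finally show ?thesis
    unfolding fourier_coeff_def F_def G_def by (simp add: mult_ac)
qed

lemma max_fourier_coeff_mult:
  assumes "m > 0" "n > 0" "coprime m n"
    and "\<forall>x. f (x + int m) = f x" and "\<forall>x. g (x + int n) = g x"
  shows "max_fourier_coeff (m * n) (\<lambda>r. f r * g r) \<le> max_fourier_coeff m f * max_fourier_coeff n g"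
proof -
  have "gcd (int n) (int m) = 1"
    using assms(3) by (simp add: coprime_iff_gcd_eq_1 gcd.commute)
  then obtain u v where bezout: "u * int n + v * int m = 1"
    using bezout_int[of "int n" "int m"] by auto
  have "norm (fourier_coeff (m * n) (\<lambda>r. f r * g r) b) \<le> max_fourier_coeff m f * max_fourier_coeff n g" for b
    unfolding fourier_coeff_mult[OF assms bezout] norm_mult
    by (intro mult_mono norm_fourier_coeff_le_max max_fourier_coeff_nonneg norm_ge_zero assms)
  then show ?thesis
    unfolding max_fourier_coeff_def[of "m * n"] using assms(1,2) by (intro Max.boundedI) auto
qed

lemma max_fourier_coeff_le_prod_prime_powers:
  fixes q :: nat and a :: "nat \<Rightarrow> int \<Rightarrow> complex"
  assumes "q > 0"
    and periodic: "\<forall>d n. d dvd q \<longrightarrow> a d (n + int d) = a d n"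
    and bounded: "\<forall>n. norm (a 1 n) \<le> 1"
    and multiplicative: "\<forall>d1 d2 n. d1 * d2 dvd q \<longrightarrow> coprime d1 d2 \<longrightarrow>
      a (d1 * d2) n = a d1 n * a d2 n"
  shows "max_fourier_coeff q (a q)
     \<le> (\<Prod>p\<in>prime_factors q. max_fourier_coeff (p ^ multiplicity p q) (a (p ^ multiplicity p q)))"
proof -
  let ?pp = "\<lambda>p. p ^ multiplicity p q"
  have "max_fourier_coeff (\<Prod>p\<in>A. ?pp p) (a (\<Prod>p\<in>A. ?pp p))
      \<le> (\<Prod>p\<in>A. max_fourier_coeff (?pp p) (a (?pp p)))"
    if "A \<subseteq> prime_factors q" for A
    using finite_subset[OF that finite_set_mset] that
  proof (induction A rule: finite_subset_induct')
    case empty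
    then show ?case using bounded max_fourier_coeff_1[of "a 1"] by simp
  next
    case (insert p A)
    let ?P = "\<Prod>p\<in>A. ?pp p"
    have prime: "prime p" using insert by auto
    have coprime: "coprime (?pp p) ?P"
    proof (rule prod_coprime_right)
      fix p' assume "p' \<in> A"
      then have "coprime p p'" using insert by (intro primes_coprime) auto
      then show "coprime (?pp p) (?pp p')" by simp
    qed
    have dvd: "?pp p * ?P dvd q"
    proof -
      have "?pp p * ?P = (\<Prod>p\<in>insert p A. ?pp p)" using insert by simp
      also have "\<dots> dvd (\<Prod>p\<in>prime_factors q. ?pp p)"
        using insert by (intro prod_dvd_prod_subset) auto
      finally show ?thesis using prime_factorization_nat[OF assms(1)] by simp
    qed
    have split: "a (?pp p * ?P) = (\<lambda>r. a (?pp p) r * a ?P r)"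
      using multiplicative[rule_format, OF dvd coprime] by (rule ext)
    have P_pos: "?P > 0" using insert by (intro prod_pos) (auto intro: prime_gt_0_nat)
    have "max_fourier_coeff (?pp p * ?P) (a (?pp p * ?P))
        \<le> max_fourier_coeff (?pp p) (a (?pp p)) * max_fourier_coeff ?P (a ?P)"
      unfolding split
    proof (rule max_fourier_coeff_mult)
      show "?pp p > 0" using prime by (simp add: prime_gt_0_nat)
      show "\<forall>x. a (?pp p) (x + int (?pp p)) = a (?pp p) x"
        using periodic dvd_mult_left[OF dvd] by blast
      show "\<forall>x. a ?P (x + int ?P) = a ?P x"
        using periodic dvd_mult_right[OF dvd] by blast
    qed (use P_pos coprime in simp_all)
    also have "\<dots> \<le> max_fourier_coeff (?pp p) (a (?pp p)) *
        (\<Prod>p\<in>A. max_fourier_coeff (?pp p) (a (?pp p)))"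
      using insert.IH prime
      by (intro mult_left_mono max_fourier_coeff_nonneg) (simp_all add: prime_gt_0_nat)
    finally show ?case using insert by simp
  qed
  from this[OF order_refl] show ?thesis
    by (simp flip: prime_factorization_nat[OF assms(1)])
qed

lemma norm_sum_multiplicative_le:
  fixes q N :: nat and a :: "nat \<Rightarrow> int \<Rightarrow> complex" and M :: int
  assumes "q > 0" "N > 0"
    and periodic: "\<forall>d n. d dvd q \<longrightarrow> a d (n + int d) = a d n"
    and bounded: "\<forall>d n. d dvd q \<longrightarrow> norm (a d n) \<le> 1"
    and multiplicative: "\<forall>d1 d2 n. d1 * d2 dvd q \<longrightarrow> coprime d1 d2 \<longrightarrow>
      a (d1 * d2) n = a d1 n * a d2 n"
  shows "(1 / real N) * norm (\<Sum>n\<in>{M+1..M + int N}. a q n)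
    \<le> 6 * (1 + real q * ln (real q) / real N) *
      (\<Prod>p\<in>prime_factors q. max_fourier_coeff (p ^ multiplicity p q) (a (p ^ multiplicity p q)))"
proof -
  have "(1 / real N) * norm (\<Sum>n\<in>{M+1..M + int N}. a q n)
      \<le> 6 * (1 + real q * ln (real q) / real N) * max_fourier_coeff q (a q)"
    using periodic assms(1,2) by (intro norm_sum_periodic_le_ln) auto
  also have "\<dots> \<le> 6 * (1 + real q * ln (real q) / real N) *
      (\<Prod>p\<in>prime_factors q. max_fourier_coeff (p ^ multiplicity p q) (a (p ^ multiplicity p q)))"
    using assms by (intro mult_left_mono max_fourier_coeff_le_prod_prime_powers) auto
  finally show ?thesis .
qed

theorem lemma6p1:
  "\<exists>C::real. C > 0 \<and>
    (\<forall>(q::nat) (a::nat \<Rightarrow> int \<Rightarrow> complex) (M::int) (N::nat).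
      q > 0 \<longrightarrow> N > 0 \<longrightarrow>
      (\<forall>d n. d dvd q \<longrightarrow> a d (n + int d) = a d n) \<longrightarrow>
      (\<forall>d n. d dvd q \<longrightarrow> norm (a d n) \<le> 1) \<longrightarrow>
      (\<forall>d1 d2 n. d1 * d2 dvd q \<longrightarrow> coprime d1 d2 \<longrightarrow>
          a (d1 * d2) n = a d1 n * a d2 n) \<longrightarrow>
      (1 / real N) * norm (\<Sum>n\<in>{M+1..M + int N}. a q n)
        \<le> C * (1 + real q * ln (real q) / real N) *
          (\<Prod>p\<in>prime_factors q.
             Max ((\<lambda>b::int. norm ((1 / real (p ^ multiplicity p q)) *
                 (\<Sum>r\<in>{0..<int (p ^ multiplicity p q)}.
                    a (p ^ multiplicity p q) r *
                    ee (real_of_int (b * r) / real (p ^ multiplicity p q)))))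
               ` {0..<int (p ^ multiplicity p q)})))"
  by (intro exI[of _ 6] conjI allI impI, fold fourier_coeff_def max_fourier_coeff_def)
    (simp, rule norm_sum_multiplicative_le)

end
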